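(* Fix a positive integer $d_m$. For $n$ and $k$ with $k\ge\ell(d_m)$ and $n\ge k+\ell(d_m)+2d_m$, let $n'=n-k-\ell(d_m)-2d_m$ and let $\mathcal C_2(n,k,1,d_m)=\{0^k\vec u1^{d_m}\vec c1^{d_m}:\vec c\in A_2(n',k,d_m)\}$. Then $$\min_{k}\ \mathrm{red}(\mathcal C_2(n,k,1,d_m))=\log_2 n+(d_m-1)\log_2\log_2 n+\Theta(1),$$ and the minimum is attained by values of $k$ of the form $k=\log_2 n+(d_m-1)\log_2\log_2 n+\Theta(1)$.
   Context: Binary alphabet. A vector of length $m$ is a $(d,k)$-WWL vector if $m<k$ or every window of $k$ consecutive entries has Hamming weight at least $d$; $A_2(m,k,d)$ is the set of binary $(d,k)$-WWL vectors of length $m$. $\ell(d)=d\lceil\log_2 d\rceil+d$ and $\vec u=1^d\vec u_0\cdots\vec u_{\lceil\log_2 d\rceil-1}\in\{0,1\}^{\ell(d)}$, where $\vec u_i$ is the length-$d$ prefix of $(1^{2^i}0^{2^i})^d$; here $d=d_m$. For $A\subseteq\{0,1\}^n$, $\mathrm{red}(A)=n-\log_2|A|$. *)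

theory Defs
  imports Complex_Main
begin

text \<open>Binary vectors are boolean lists (True = 1, False = 0).\<close>

definition hweight :: "bool list \<Rightarrow> nat" where
  "hweight x = length (filter id x)"

definition is_wwl :: "nat \<Rightarrow> nat \<Rightarrow> bool list \<Rightarrow> bool" where
  "is_wwl d k x \<longleftrightarrow> length x < k \<or>
     (\<forall>i. i + k \<le> length x \<longrightarrow> d \<le> hweight (take k (drop i x)))"

definition A2 :: "nat \<Rightarrow> nat \<Rightarrow> nat \<Rightarrow> bool list set" where
  "A2 m k d = {x. length x = m \<and> is_wwl d k x}"

definition clog2 :: "nat \<Rightarrow> nat" where
  "clog2 d = nat \<lceil>log 2 (real d)\<rceil>"

definition ell :: "nat \<Rightarrow> nat" where
  "ell d = d * clog2 d + d"

definition u_i :: "nat \<Rightarrow> nat \<Rightarrow> bool list" where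
  "u_i d i = take d (concat (replicate d (replicate (2^i) True @ replicate (2^i) False)))"

definition u_vec :: "nat \<Rightarrow> bool list" where
  "u_vec d = replicate d True @ concat (map (u_i d) [0..<clog2 d])"

definition red :: "nat \<Rightarrow> bool list set \<Rightarrow> real" where
  "red n A = real n - log 2 (real (card A))"

definition C2 :: "nat \<Rightarrow> nat \<Rightarrow> nat \<Rightarrow> bool list set" where
  "C2 n k d = (\<lambda>c. replicate k False @ u_vec d @ replicate d True @ c @ replicate d True)
      ` A2 (n - k - ell d - 2 * d) k d"

definition admissible_k :: "nat \<Rightarrow> nat \<Rightarrow> nat set" where
  "admissible_k d n = {k. ell d \<le> k \<and> k + ell d + 2 * d \<le> n}"

definition min_red :: "nat \<Rightarrow> nat \<Rightarrow> real" where
  "min_red d n = Min ((\<lambda>k. red n (C2 n k d)) ` admissible_k d n)"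

end

theory Submission
  imports Defs "HOL-Real_Asymp.Real_Asymp"
begin

text \<open>
  Stripping the fixed prefix and suffix, red(C2(n,k,1,d)) equals k + ell(d) + 2d plus the
  redundancy of the (d,k)-WWL vectors of length m = n - O(log n). A union bound over the at most
  m windows, each of which has at most d k^(d-1) light values, shows that this redundancy is at
  most 1 as soon as 2^k >= 2 m d k^(d-1), which holds for some k = log n + (d-1) log log n + O(1).
  Conversely, cut a vector into blocks of length about 3k/2: every block has to avoid about
  k 2^(k/2) binom(k/2, d-1) explicit patterns containing a window of weight d-1, so the redundancy
  is at least of order n k^(d-1) / 2^k, which exceeds any constant once
  k <= log n + (d-1) log log n - c for c large. As the redundancy of C2 is at least k, every
  minimising k lies within O(1) of log n + (d-1) log log n, and so does the minimum.
\<close>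

section \<open>Counting binary lists by weight\<close>

definition blists :: "nat \<Rightarrow> bool list set" where
  "blists n = {xs. length xs = n}"

definition weight_lists :: "nat \<Rightarrow> nat \<Rightarrow> bool list set" where
  "weight_lists k j = {w. length w = k \<and> hweight w = j}"

definition light_lists :: "nat \<Rightarrow> nat \<Rightarrow> bool list set" where
  "light_lists k d = {w. length w = k \<and> hweight w < d}"

lemma hweight_simps [simp]:
  "hweight [] = 0" "hweight (True # w) = Suc (hweight w)" "hweight (False # w) = hweight w"
  "hweight (x @ y) = hweight x + hweight y"
  "hweight (replicate n False) = 0" "hweight (replicate n True) = n"
  by (auto simp: hweight_def)

lemma blists_eq_lists_length: "blists n = {xs. set xs \<subseteq> UNIV \<and> length xs = n}"
  by (simp add: blists_def)

lemma finite_blists [simp]: "finite (blists n)"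
  unfolding blists_eq_lists_length by (rule finite_lists_length_eq) simp

lemma card_blists: "card (blists n) = 2 ^ n"
  using card_lists_length_eq[of "UNIV :: bool set" n] by (simp add: blists_eq_lists_length)

lemma weight_lists_subset: "weight_lists k j \<subseteq> blists k"
  by (auto simp: weight_lists_def blists_def)

lemma finite_weight_lists [simp]: "finite (weight_lists k j)"
  using weight_lists_subset finite_blists finite_subset by blast

lemma card_weight_lists: "card (weight_lists k j) = k choose j"
proof (induction k arbitrary: j)
  case 0
  have "weight_lists 0 j = (if j = 0 then {[]} else {})" by (auto simp: weight_lists_def)
  then show ?case by simp
next
  case (Suc k)
  show ?case
  proof (cases j)
    case 0
    have "weight_lists (Suc k) 0 = Cons False ` weight_lists k 0"
    proof (rule set_eqI)
      fix w show "w \<in> weight_lists (Suc k) 0 \<longleftrightarrow> w \<in> Cons False ` weight_lists k 0"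
        by (cases w) (auto simp: weight_lists_def hweight_def)
    qed
    then show ?thesis using Suc 0 by (simp add: card_image)
  next
    case (Suc j')
    have split:
      "weight_lists (Suc k) j = Cons False ` weight_lists k j \<union> Cons True ` weight_lists k j'"
    proof (rule set_eqI)
      fix w
      show "w \<in> weight_lists (Suc k) j \<longleftrightarrow>
          w \<in> Cons False ` weight_lists k j \<union> Cons True ` weight_lists k j'"
        using Suc by (cases w; cases "hd w") (auto simp: weight_lists_def)
    qed
    have "card (weight_lists (Suc k) j)
        = card (Cons False ` weight_lists k j) + card (Cons True ` weight_lists k j')"
      unfolding split by (rule card_Un_disjoint) auto
    also have "\<dots> = card (weight_lists k j) + card (weight_lists k j')"
      by (simp add: card_image)
    finally show ?thesis using Suc.IH Suc by simp
  qed
qed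

lemma light_lists_eq_UN: "light_lists k d = (\<Union>j<d. weight_lists k j)"
  by (auto simp: light_lists_def weight_lists_def)

lemma finite_light_lists [simp]: "finite (light_lists k d)"
  unfolding light_lists_eq_UN by simp

lemma card_light_lists: "card (light_lists k d) = (\<Sum>j<d. k choose j)"
proof -
  have "card (\<Union>j<d. weight_lists k j) = (\<Sum>j<d. card (weight_lists k j))"
  proof (rule card_UN_disjoint)
    show "\<forall>i\<in>{..<d}. \<forall>j\<in>{..<d}. i \<noteq> j \<longrightarrow> weight_lists k i \<inter> weight_lists k j = {}"
      by (auto simp: weight_lists_def)
  qed simp_all
  then show ?thesis by (simp add: light_lists_eq_UN card_weight_lists)
qed

lemma card_light_lists_le:
  assumes "1 \<le> k"
  shows "card (light_lists k d) \<le> d * k ^ (d - 1)"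
proof -
  have "k choose j \<le> k ^ (d - 1)" if "j < d" for j
  proof (cases "j \<le> k")
    case True
    then have "k choose j \<le> k ^ j" by (rule binomial_le_pow)
    also have "\<dots> \<le> k ^ (d - 1)" using that assms by (intro power_increasing) auto
    finally show ?thesis .
  qed (simp add: binomial_eq_0)
  then have "(\<Sum>j<d. k choose j) \<le> (\<Sum>j<d. k ^ (d - 1))" by (intro sum_mono) simp
  then show ?thesis by (simp add: card_light_lists)
qed

section \<open>Windowed-weight-limited vectors\<close>

lemma is_wwl_take:
  assumes "is_wwl d k x"
  shows "is_wwl d k (take a x)"
proof -
  have "take k (drop i (take a x)) = take k (drop i x)" if "i + k \<le> length (take a x)" for i
    using that by (auto simp: drop_take take_take min_def split: if_splits)
  then show ?thesis using assms by (fastforce simp: is_wwl_def)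
qed

lemma is_wwl_drop:
  assumes "is_wwl d k x"
  shows "is_wwl d k (drop a x)"
proof (cases "a \<le> length x")
  case True
  have "take k (drop i (drop a x)) = take k (drop (a + i) x)" for i by (simp add: add.commute)
  then show ?thesis using assms True by (fastforce simp: is_wwl_def)
next
  case False
  then show ?thesis using assms by (cases "k = 0") (auto simp: is_wwl_def)
qed

lemma A2_subset_blists: "A2 m k d \<subseteq> blists m"
  by (auto simp: A2_def blists_def)

lemma finite_A2 [simp]: "finite (A2 m k d)"
  by (rule finite_subset[OF A2_subset_blists finite_blists])

lemma card_A2_le: "card (A2 m k d) \<le> 2 ^ m"
  using card_mono[OF finite_blists A2_subset_blists] by (simp add: card_blists)

lemma replicate_True_in_A2: "d \<le> k \<Longrightarrow> replicate m True \<in> A2 m k d"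
  by (auto simp: A2_def is_wwl_def min_def)

lemma card_A2_pos: "d \<le> k \<Longrightarrow> 0 < card (A2 m k d)"
  using replicate_True_in_A2[of d k m] by (auto simp: card_gt_0_iff)

lemma A2_mono:
  assumes "k \<le> k'"
  shows "A2 m k d \<subseteq> A2 m k' d"
proof
  fix x assume x: "x \<in> A2 m k d"
  have "d \<le> hweight (take k' (drop i x))" if "i + k' \<le> length x" for i
  proof -
    have "d \<le> hweight (take k (drop i x))" using x that assms by (auto simp: A2_def is_wwl_def)
    also have "take k' (drop i x) = take k (drop i x) @ take (k' - k) (drop (i + k) x)"
      using assms by (metis add.commute drop_drop le_add_diff_inverse take_add)
    then have "hweight (take k (drop i x)) \<le> hweight (take k' (drop i x))" by simp
    finally show ?thesis .
  qed
  then show "x \<in> A2 m k' d" using x by (auto simp: A2_def is_wwl_def)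
qed

lemma card_A2_mono: "k \<le> k' \<Longrightarrow> card (A2 m k d) \<le> card (A2 m k' d)"
  by (rule card_mono[OF finite_A2 A2_mono])

lemma card_A2_append_le: "card (A2 (a + b) k d) \<le> card (A2 a k d) * card (A2 b k d)"
proof -
  have "A2 (a + b) k d \<subseteq> (\<lambda>(u, v). u @ v) ` (A2 a k d \<times> A2 b k d)"
  proof
    fix x assume x: "x \<in> A2 (a + b) k d"
    then have "take a x \<in> A2 a k d" "drop a x \<in> A2 b k d"
      by (auto simp: A2_def is_wwl_take is_wwl_drop)
    then show "x \<in> (\<lambda>(u, v). u @ v) ` (A2 a k d \<times> A2 b k d)"
      by (intro image_eqI[where x="(take a x, drop a x)"]) auto
  qed
  then have "card (A2 (a + b) k d) \<le> card ((\<lambda>(u, v). u @ v) ` (A2 a k d \<times> A2 b k d))"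
    by (intro card_mono finite_imageI) auto
  also have "\<dots> \<le> card (A2 a k d \<times> A2 b k d)" by (intro card_image_le) auto
  finally show ?thesis by (simp add: card_cartesian_product)
qed

lemma card_A2_blocks_le: "card (A2 (q * L + r) k d) \<le> card (A2 L k d) ^ q * 2 ^ r"
proof (induction q)
  case 0
  then show ?case using card_A2_le by simp
next
  case (Suc q)
  have "card (A2 (Suc q * L + r) k d) = card (A2 (L + (q * L + r)) k d)" by (simp add: add.assoc)
  also have "\<dots> \<le> card (A2 L k d) * card (A2 (q * L + r) k d)" by (rule card_A2_append_le)
  also have "\<dots> \<le> card (A2 L k d) * (card (A2 L k d) ^ q * 2 ^ r)"
    using Suc.IH by (intro mult_left_mono) auto
  finally show ?case by (simp add: mult.assoc)
qed

lemma card_blists_diff_A2_le: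
  assumes "1 \<le> k"
  shows "2 ^ k * card (blists m - A2 m k d) \<le> m * card (light_lists k d) * 2 ^ m"
proof -
  define T where
    "T i = (\<lambda>(a, w, b). a @ w @ b) ` (blists i \<times> light_lists k d \<times> blists (m - i - k))" for i
  define I where "I = {i. i + k \<le> m}"
  have cover: "blists m - A2 m k d \<subseteq> (\<Union>i\<in>I. T i)"
  proof
    fix x assume x: "x \<in> blists m - A2 m k d"
    then obtain i where i: "i + k \<le> m" "hweight (take k (drop i x)) < d" and lx: "length x = m"
      by (auto simp: blists_def A2_def is_wwl_def not_le)
    have "x = take i x @ take k (drop i x) @ drop (i + k) x"
      by (metis append_take_drop_id drop_drop add.commute)
    moreover have "take i x \<in> blists i" "take k (drop i x) \<in> light_lists k d"
      "drop (i + k) x \<in> blists (m - i - k)"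
      using i lx by (auto simp: blists_def light_lists_def)
    ultimately have "x \<in> T i" unfolding T_def by force
    then show "x \<in> (\<Union>i\<in>I. T i)" using i by (auto simp: I_def)
  qed
  have "I \<subseteq> {..<m}" using assms by (auto simp: I_def)
  then have finite_I: "finite I" and card_I: "card I \<le> m"
    using finite_subset card_mono[of "{..<m}" I] by auto
  have finite_T: "finite (T i)" for i
    unfolding T_def by (intro finite_imageI finite_cartesian_product) simp_all
  have card_T: "2 ^ k * card (T i) \<le> card (light_lists k d) * 2 ^ m" if "i \<in> I" for i
  proof -
    have "card (T i) \<le> card (blists i \<times> light_lists k d \<times> blists (m - i - k))"
      unfolding T_def by (intro card_image_le finite_cartesian_product) simp_all
    also have "\<dots> = 2 ^ i * card (light_lists k d) * 2 ^ (m - i - k)"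
      by (simp add: card_cartesian_product card_blists)
    finally have "2 ^ k * card (T i) \<le> card (light_lists k d) * (2 ^ i * 2 ^ (m - i - k) * 2 ^ k)"
      by (simp add: algebra_simps)
    also have "2 ^ i * 2 ^ (m - i - k) * 2 ^ k = (2::nat) ^ m"
      using that by (simp add: I_def flip: power_add)
    finally show ?thesis .
  qed
  have "2 ^ k * card (blists m - A2 m k d) \<le> 2 ^ k * card (\<Union>i\<in>I. T i)"
    using cover by (intro mult_left_mono card_mono) (auto simp: finite_I finite_T)
  also have "\<dots> \<le> 2 ^ k * (\<Sum>i\<in>I. card (T i))" by (intro mult_left_mono card_UN_le finite_I) auto
  also have "\<dots> = (\<Sum>i\<in>I. 2 ^ k * card (T i))" by (simp add: sum_distrib_left)
  also have "\<dots> \<le> (\<Sum>i\<in>I. card (light_lists k d) * 2 ^ m)" by (rule sum_mono) (rule card_T)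
  also have "\<dots> \<le> m * card (light_lists k d) * 2 ^ m" using card_I by simp
  finally show ?thesis .
qed

section \<open>Patterns with a light window\<close>

text \<open>
  A pattern for position j has the window w @ 0^(k-h) of weight D at position j; the 1 at position
  j - 1 lies in the window at j of every pattern for a larger position, which makes the pattern
  sets for different j disjoint.
\<close>

definition light_window_pattern ::
    "nat \<Rightarrow> nat \<Rightarrow> bool list \<times> bool list \<times> bool list \<Rightarrow> bool list" where
  "light_window_pattern k h = (\<lambda>(a, w, b). a @ [True] @ w @ replicate (k - h) False @ b)"

definition light_window_patterns :: "nat \<Rightarrow> nat \<Rightarrow> nat \<Rightarrow> nat \<Rightarrow> bool list set" where
  "light_window_patterns k h D j =
     light_window_pattern k h ` (blists (j - 1) \<times> weight_lists h D \<times> blists (h - j))"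

lemma light_window_patternsE:
  assumes "x \<in> light_window_patterns k h D j"
  obtains a w b where "x = light_window_pattern k h (a, w, b)"
    and "length a = j - 1" "length w = h" "hweight w = D" "length b = h - j"
  using assms by (auto simp: light_window_patterns_def blists_def weight_lists_def)

lemma window_light_window_pattern:
  assumes "length a = j - 1" "length w = h" "1 \<le> j" "h \<le> k"
  shows "take k (drop j (light_window_pattern k h (a, w, b))) = w @ replicate (k - h) False"
  using assms by (simp add: light_window_pattern_def take_append)

lemma light_window_patterns_subset:
  "\<lbrakk>1 \<le> j; j \<le> h; h \<le> k\<rbrakk> \<Longrightarrow> light_window_patterns k h D j \<subseteq> blists (k + h)"
  by (auto simp: light_window_patterns_def light_window_pattern_def blists_def weight_lists_def)

lemma light_window_patterns_disjoint_A2: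
  assumes "1 \<le> j" "j \<le> h" "h \<le> k"
  shows "light_window_patterns k h D j \<inter> A2 (k + h) k (Suc D) = {}"
proof -
  have "x \<notin> A2 (k + h) k (Suc D)" if "x \<in> light_window_patterns k h D j" for x
  proof
    assume x: "x \<in> A2 (k + h) k (Suc D)"
    obtain a w b where xe: "x = light_window_pattern k h (a, w, b)" and a: "length a = j - 1"
      and w: "length w = h" "hweight w = D"
      using \<open>x \<in> light_window_patterns k h D j\<close> by (rule light_window_patternsE)
    have "Suc D \<le> hweight (take k (drop j x))"
      using x assms by (auto simp: A2_def is_wwl_def)
    also have "\<dots> = D" using window_light_window_pattern[OF a w(1)] assms w xe by simp
    finally show False by simp
  qed
  then show ?thesis by blast
qed

lemma hweight_le_hweight_take_append: "length u \<le> k \<Longrightarrow> hweight u \<le> hweight (take k (u @ v))"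
  by (simp add: take_append)

lemma light_window_patterns_disjoint:
  assumes "1 \<le> j" "j < j'" "j' \<le> h" "2 * h \<le> k"
  shows "light_window_patterns k h D j \<inter> light_window_patterns k h D j' = {}"
proof -
  have "x \<notin> light_window_patterns k h D j'" if "x \<in> light_window_patterns k h D j" for x
  proof
    assume "x \<in> light_window_patterns k h D j'"
    then obtain a' w' b' where xe': "x = light_window_pattern k h (a', w', b')"
      and a': "length a' = j' - 1" and w': "length w' = h" "hweight w' = D"
      by (rule light_window_patternsE)
    obtain a w b where xe: "x = light_window_pattern k h (a, w, b)" and a: "length a = j - 1"
      and w: "length w = h" "hweight w = D"
      using \<open>x \<in> light_window_patterns k h D j\<close> by (rule light_window_patternsE)
    have "hweight (take k (drop j x)) = D"
      using window_light_window_pattern[OF a w(1)] assms w xe by simp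
    moreover have "drop j x = (drop j a' @ [True] @ w') @ replicate (k - h) False @ b'"
      using xe' a' assms by (simp add: light_window_pattern_def)
    moreover have "length (drop j a' @ [True] @ w') \<le> k" using a' w' assms by simp
    ultimately have "hweight (drop j a' @ [True] @ w') \<le> D"
      by (metis hweight_le_hweight_take_append)
    then show False using w' by simp
  qed
  then show ?thesis by blast
qed

lemma card_light_window_patterns:
  assumes "1 \<le> j" "j \<le> h"
  shows "card (light_window_patterns k h D j) = 2 ^ (h - 1) * (h choose D)"
proof -
  have "inj_on (light_window_pattern k h) (blists (j - 1) \<times> weight_lists h D \<times> blists (h - j))"
  proof (rule inj_onI)
    fix t t' assume "t \<in> blists (j - 1) \<times> weight_lists h D \<times> blists (h - j)"
      and "t' \<in> blists (j - 1) \<times> weight_lists h D \<times> blists (h - j)"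
      and e: "light_window_pattern k h t = light_window_pattern k h t'"
    moreover obtain a w b a' w' b' where "t = (a, w, b)" "t' = (a', w', b')"
      by (cases t, cases t') blast
    ultimately have "length a = length a'" "length w = length w'"
      and "a @ [True] @ w @ replicate (k - h) False @ b
         = a' @ [True] @ w' @ replicate (k - h) False @ b'"
      by (auto simp: blists_def weight_lists_def light_window_pattern_def)
    then show "t = t'" using \<open>t = (a, w, b)\<close> \<open>t' = (a', w', b')\<close>
      by (auto simp: append_eq_append_conv)
  qed
  then have "card (light_window_patterns k h D j)
      = card (blists (j - 1) \<times> weight_lists h D \<times> blists (h - j))"
    unfolding light_window_patterns_def by (rule card_image)
  also have "\<dots> = 2 ^ (j - 1 + (h - j)) * (h choose D)"
    by (simp add: card_cartesian_product card_blists card_weight_lists power_add)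
  also have "j - 1 + (h - j) = h - 1" using assms by simp
  finally show ?thesis .
qed

lemma card_A2_block_le:
  assumes "2 * h \<le> k"
  shows "card (A2 (k + h) k (Suc D)) + h * (2 ^ (h - 1) * (h choose D)) \<le> 2 ^ (k + h)"
proof -
  let ?U = "\<Union>j\<in>{1..h}. light_window_patterns k h D j"
  have finite_patterns: "finite (light_window_patterns k h D j)" for j
    unfolding light_window_patterns_def by simp
  have "card ?U = (\<Sum>j\<in>{1..h}. card (light_window_patterns k h D j))"
  proof (rule card_UN_disjoint)
    show "\<forall>i\<in>{1..h}. \<forall>j\<in>{1..h}. i \<noteq> j \<longrightarrow>
        light_window_patterns k h D i \<inter> light_window_patterns k h D j = {}"
    proof (intro ballI impI)
      fix i j assume "i \<in> {1..h}" "j \<in> {1..h}" "i \<noteq> j"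
      then consider "1 \<le> i" "i < j" "j \<le> h" | "1 \<le> j" "j < i" "i \<le> h" by fastforce
      then show "light_window_patterns k h D i \<inter> light_window_patterns k h D j = {}"
        using light_window_patterns_disjoint[OF _ _ _ assms] by cases (auto simp: Int_commute)
    qed
  qed (auto simp: finite_patterns)
  also have "\<dots> = (\<Sum>j\<in>{1..h}. 2 ^ (h - 1) * (h choose D))"
    by (rule sum.cong) (auto simp: card_light_window_patterns)
  also have "\<dots> = h * (2 ^ (h - 1) * (h choose D))" by simp
  finally have card_U: "card ?U = h * (2 ^ (h - 1) * (h choose D))" .
  have U_subset: "?U \<subseteq> blists (k + h)"
    using light_window_patterns_subset assms by (intro UN_least) auto
  have "A2 (k + h) k (Suc D) \<subseteq> blists (k + h) - ?U"
  proof
    fix x assume x: "x \<in> A2 (k + h) k (Suc D)"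
    have "x \<notin> light_window_patterns k h D j" if "j \<in> {1..h}" for j
      using light_window_patterns_disjoint_A2[of j h k D] that assms x by auto
    then show "x \<in> blists (k + h) - ?U" using x A2_subset_blists by blast
  qed
  then have "card (A2 (k + h) k (Suc D)) \<le> card (blists (k + h) - ?U)"
    by (intro card_mono) simp_all
  also have "\<dots> = card (blists (k + h)) - card ?U"
    using U_subset by (intro card_Diff_subset) (auto simp: finite_patterns)
  finally show ?thesis
    using card_U card_blists[of "k + h"] card_mono[OF finite_blists U_subset] by simp
qed

section \<open>Redundancy of windowed-weight-limited vectors\<close>

lemma red_A2_nonneg:
  assumes "d \<le> k"
  shows "0 \<le> red m (A2 m k d)"
proof -
  have "real (card (A2 m k d)) \<le> 2 ^ m"
    using card_A2_le[of m k d] by (metis of_nat_le_iff of_nat_numeral of_nat_power)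
  then have "log 2 (real (card (A2 m k d))) \<le> log 2 (2 ^ m)"
    using card_A2_pos[OF assms] by (intro log_mono) simp_all
  then show ?thesis by (simp add: red_def)
qed

lemma red_A2_antimono:
  assumes "d \<le> k" "k \<le> k'"
  shows "red m (A2 m k' d) \<le> red m (A2 m k d)"
proof -
  have "log 2 (real (card (A2 m k d))) \<le> log 2 (real (card (A2 m k' d)))"
    using card_A2_pos[OF assms(1)] card_A2_mono[OF assms(2)] by (intro log_mono) simp_all
  then show ?thesis by (simp add: red_def)
qed

lemma red_A2_le_1:
  assumes "1 \<le> k" "d \<le> k" and few_light: "2 * m * card (light_lists k d) \<le> 2 ^ k"
  shows "red m (A2 m k d) \<le> 1"
proof -
  have "card (blists m - A2 m k d) = 2 ^ m - card (A2 m k d)"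
    using card_Diff_subset[OF finite_A2 A2_subset_blists] card_blists by simp
  then have "2 ^ k * (2 ^ m - card (A2 m k d)) * 2 \<le> m * card (light_lists k d) * 2 ^ m * 2"
    using card_blists_diff_A2_le[OF assms(1), of m d] by simp
  also have "\<dots> \<le> 2 ^ k * 2 ^ m" using few_light by simp
  finally have "2 ^ m \<le> 2 * card (A2 m k d)" using card_A2_le[of m k d] by simp
  then have "real (2 ^ m) \<le> real (2 * card (A2 m k d))" by (simp only: of_nat_le_iff)
  then have "log 2 (2 ^ m) \<le> log 2 (2 * real (card (A2 m k d)))"
    by (intro log_mono) simp_all
  then show ?thesis
    using card_A2_pos[OF assms(2)] by (simp add: red_def log_mult_pos)
qed

lemma log2_one_minus_le:
  fixes p :: real
  assumes "0 \<le> p" "p < 1"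
  shows "log 2 (1 - p) \<le> - p"
proof -
  have "ln (1 - p) \<le> - p" by (rule ln_one_minus_pos_upper_bound[OF assms])
  also have "\<dots> \<le> - p * ln 2" using assms ln_2_less_1 by (simp add: mult_right_le_one_le)
  finally show ?thesis by (simp add: log_def pos_divide_le_eq)
qed

lemma log2_card_A2_block_le:
  assumes "2 * h \<le> k" "1 \<le> h" "Suc D \<le> k"
  shows "log 2 (real (card (A2 (k + h) k (Suc D))))
    \<le> real (k + h) - real h * real (h choose D) / 2 ^ (k + 1)"
proof -
  define p :: real where "p = real h * real (h choose D) / 2 ^ (k + 1)"
  have pos: "0 < real (card (A2 (k + h) k (Suc D)))" using card_A2_pos[OF assms(3)] by simp
  have "(2::real) ^ (k + h) = 2 ^ ((h - 1) + (k + 1))" using assms(2) by simp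
  then have "(2::real) ^ (k + h) = 2 ^ (h - 1) * 2 ^ (k + 1)" by (simp only: power_add)
  then have patterns: "real h * (2 ^ (h - 1) * real (h choose D)) = 2 ^ (k + h) * p"
    by (simp add: p_def field_simps)
  have "real (card (A2 (k + h) k (Suc D)) + h * (2 ^ (h - 1) * (h choose D)))
      \<le> real (2 ^ (k + h))"
    using card_A2_block_le[OF assms(1), of D] by (simp only: of_nat_le_iff)
  then have card_le: "real (card (A2 (k + h) k (Suc D))) \<le> 2 ^ (k + h) * (1 - p)"
    using patterns by (simp add: algebra_simps)
  then have "0 < 2 ^ (k + h) * (1 - p)" using pos by linarith
  then have "p < 1" by (simp add: zero_less_mult_iff)
  have "log 2 (real (card (A2 (k + h) k (Suc D)))) \<le> log 2 (2 ^ (k + h) * (1 - p))"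
    using card_le pos by (intro log_mono) simp_all
  also have "\<dots> \<le> real (k + h) - p"
    using \<open>p < 1\<close> log2_one_minus_le[of p] by (simp add: log_mult_pos p_def)
  finally show ?thesis by (simp add: p_def)
qed

lemma red_A2_ge_blocks:
  assumes "2 * h \<le> k" "1 \<le> h" "Suc D \<le> k"
  shows "real (m div (k + h)) * (real h * real (h choose D) / 2 ^ (k + 1))
    \<le> red m (A2 m k (Suc D))"
proof -
  define L where "L = k + h"
  define q where "q = m div L"
  define r where "r = m mod L"
  define p :: real where "p = real h * real (h choose D) / 2 ^ (k + 1)"
  have m: "m = q * L + r" by (simp add: q_def r_def)
  have block: "log 2 (real (card (A2 L k (Suc D)))) \<le> real L - p"
    unfolding L_def p_def by (rule log2_card_A2_block_le[OF assms])
  have "real (card (A2 m k (Suc D))) \<le> real (card (A2 L k (Suc D)) ^ q * 2 ^ r)"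
    using card_A2_blocks_le[of q L r k "Suc D"] m by (simp only: of_nat_le_iff)
  then have "real (card (A2 m k (Suc D))) \<le> real (card (A2 L k (Suc D))) ^ q * 2 ^ r"
    by simp
  then have "log 2 (real (card (A2 m k (Suc D))))
      \<le> log 2 (real (card (A2 L k (Suc D))) ^ q * 2 ^ r)"
    using card_A2_pos[OF assms(3)] by (intro log_mono) simp_all
  also have "\<dots> = real q * log 2 (real (card (A2 L k (Suc D)))) + real r"
    using card_A2_pos[OF assms(3)] by (simp add: log_mult_pos log_nat_power)
  also have "\<dots> \<le> real q * (real L - p) + real r"
    using block by (intro add_right_mono mult_left_mono) auto
  finally have "real q * p \<le> red m (A2 m k (Suc D))"
    using m by (simp add: red_def algebra_simps)
  then show ?thesis by (simp add: q_def L_def p_def)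
qed

definition block_const :: "nat \<Rightarrow> real" where
  "block_const D = 36 * (3 * real D) ^ D"

lemma block_const_pos: "0 < block_const D"
  by (cases "D = 0") (simp_all add: block_const_def)

lemma red_A2_ge:
  fixes N :: real
  assumes "3 \<le> k" "2 * D \<le> k" "N / 2 \<le> real m" "6 * real k \<le> N"
  shows "N * real k ^ D / (block_const D * 2 ^ k) \<le> red m (A2 m k (Suc D))"
proof -
  define h where "h = k div 2"
  define L where "L = k + h"
  define q where "q = m div L"
  have h: "1 \<le> h" "2 * h \<le> k" "D \<le> h" "real k / 3 \<le> real h"
    using assms(1,2) by (auto simp: h_def)
  have kpos: "0 < real k" using assms(1) by simp
  have "0 < L" "real L \<le> 3 * real k / 2" using h by (auto simp: L_def)
  have "m < (q + 1) * L"
    using dividend_less_div_times[OF \<open>0 < L\<close>, of m] by (simp add: q_def algebra_simps)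
  then have "real m < (real q + 1) * real L"
    by (metis of_nat_1 of_nat_add of_nat_less_iff of_nat_mult)
  then have "real m / real L < real q + 1" using \<open>0 < L\<close> by (simp add: divide_less_eq)
  moreover have "N / (3 * real k) \<le> real m / real L"
  proof -
    have "N / (3 * real k) \<le> real m / (3 * real k / 2)"
      using assms(3) kpos by (simp add: field_simps)
    also have "\<dots> \<le> real m / real L"
      using \<open>real L \<le> 3 * real k / 2\<close> \<open>0 < L\<close> by (intro divide_left_mono) auto
    finally show ?thesis .
  qed
  moreover have "1 \<le> N / (6 * real k)" using assms(4) kpos by simp
  ultimately have q: "N / (6 * real k) \<le> real q" by (simp add: field_simps)
  have "(real k / (3 * real D)) ^ D \<le> real (h choose D)"
  proof (cases "D = 0")
    case False
    have "(real k / (3 * real D)) ^ D \<le> (real h / real D) ^ D"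
      using h False by (intro power_mono) (auto simp: field_simps)
    also have "\<dots> \<le> real (h choose D)" by (rule binomial_ge_n_over_k_pow_k[OF h(3)])
    finally show ?thesis .
  qed simp
  then have "real k / 3 * (real k / (3 * real D)) ^ D / 2 ^ (k + 1)
      \<le> real h * real (h choose D) / 2 ^ (k + 1)"
    using h by (intro divide_right_mono mult_mono) auto
  with q have "N / (6 * real k) * (real k / 3 * (real k / (3 * real D)) ^ D / 2 ^ (k + 1))
      \<le> real q * (real h * real (h choose D) / 2 ^ (k + 1))"
    using assms(4) kpos by (intro mult_mono) auto
  also have "\<dots> \<le> red m (A2 m k (Suc D))"
    unfolding q_def L_def using h assms by (intro red_A2_ge_blocks) auto
  finally show ?thesis
    using kpos by (simp add: block_const_def power_divide field_simps)
qed

section \<open>Redundancy of the code C2\<close>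

lemma red_C2_eq:
  assumes "k \<in> admissible_k d n"
  shows "red n (C2 n k d)
    = real k + real (ell d + 2 * d) + red (n - k - ell d - 2 * d) (A2 (n - k - ell d - 2 * d) k d)"
proof -
  define m where "m = n - k - ell d - 2 * d"
  have n: "n = k + (ell d + 2 * d) + m" using assms by (simp add: admissible_k_def m_def)
  have "inj_on (\<lambda>c. replicate k False @ u_vec d @ replicate d True @ c @ replicate d True)
      (A2 m k d)"
    by (rule inj_onI) simp
  then have "card (C2 n k d) = card (A2 m k d)"
    unfolding C2_def m_def[symmetric] by (rule card_image)
  then show ?thesis by (simp add: red_def m_def[symmetric] n)
qed

lemma le_of_admissible_k: "k \<in> admissible_k d n \<Longrightarrow> d \<le> k"
  by (simp add: admissible_k_def ell_def)

lemma real_le_red_C2: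
  assumes "k \<in> admissible_k d n"
  shows "real k \<le> red n (C2 n k d)"
  using red_A2_nonneg[OF le_of_admissible_k[OF assms], of "n - k - ell d - 2 * d"]
  by (simp add: red_C2_eq[OF assms])

definition loglog_scale :: "nat \<Rightarrow> nat \<Rightarrow> real" where
  "loglog_scale D n = log 2 (real n) + real D * log 2 (log 2 (real n))"

lemma powr_loglog_scale:
  assumes "0 < log 2 (real n)"
  shows "2 powr loglog_scale D n = real n * log 2 (real n) ^ D"
proof -
  have "0 < n" using assms by (cases "n = 0") (auto simp: log_def)
  have "2 powr loglog_scale D n
      = 2 powr log 2 (real n) * (2 powr log 2 (log 2 (real n))) powr real D"
    by (simp add: loglog_scale_def powr_add powr_powr mult.commute)
  also have "\<dots> = real n * log 2 (real n) ^ D"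
    using assms \<open>0 < n\<close> by (simp add: powr_realpow)
  finally show ?thesis .
qed

lemma loglog_scale_bounds:
  assumes "1 \<le> log 2 (real n)" "real D * log 2 (log 2 (real n)) \<le> log 2 (real n)"
  shows "log 2 (real n) \<le> loglog_scale D n" "loglog_scale D n \<le> 2 * log 2 (real n)"
  using assms by (simp_all add: loglog_scale_def)

lemma few_light_windows:
  assumes "m \<le> n" "1 \<le> log 2 (real n)" "real k \<le> 2 * log 2 (real n)"
    "loglog_scale D n + 2 * real (Suc D) \<le> real k"
  shows "2 * m * card (light_lists k (Suc D)) \<le> 2 ^ k"
proof -
  define lg where "lg = log 2 (real n)"
  have "0 \<le> loglog_scale D n" using assms(2) by (simp add: loglog_scale_def)
  then have "1 \<le> k" using assms(4) by simp
  have "card (light_lists k (Suc D)) \<le> Suc D * k ^ D"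
    using card_light_lists_le[OF \<open>1 \<le> k\<close>, of "Suc D"] by simp
  then have "real (card (light_lists k (Suc D))) \<le> real (Suc D * k ^ D)"
    by (simp only: of_nat_le_iff)
  then have "real (card (light_lists k (Suc D))) \<le> real (Suc D) * real k ^ D"
    by (simp only: of_nat_mult of_nat_power)
  then have "2 * real m * real (card (light_lists k (Suc D)))
      \<le> 2 * real n * (real (Suc D) * real k ^ D)"
    using assms(1) by (intro mult_mono) auto
  also have "\<dots> \<le> 2 * real n * (real (Suc D) * (2 * lg) ^ D)"
    using assms(3) by (intro mult_left_mono power_mono) (auto simp: lg_def)
  also have "\<dots> = real n * lg ^ D * (real (Suc D) * 2 ^ Suc D)"
    by (simp add: power_mult_distrib)
  also have "\<dots> \<le> real n * lg ^ D * 4 ^ Suc D"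
  proof -
    have "real (Suc D) < 2 ^ Suc D"
      using less_exp[of "Suc D"] by (metis of_nat_less_iff of_nat_numeral of_nat_power)
    then have "real (Suc D) * 2 ^ Suc D \<le> 2 ^ Suc D * 2 ^ Suc D" by (intro mult_right_mono) auto
    also have "\<dots> = 4 ^ Suc D" by (simp flip: power_mult_distrib)
    finally show ?thesis using assms(2) by (intro mult_left_mono) (auto simp: lg_def)
  qed
  also have "\<dots> = 2 powr loglog_scale D n * 2 powr (2 * real (Suc D))"
  proof -
    have "(2::real) powr (2 * real (Suc D)) = 2 ^ (2 * Suc D)"
      using powr_realpow[of 2 "2 * Suc D"] by simp
    also have "\<dots> = 4 ^ Suc D" by (simp add: power_mult)
    finally show ?thesis using powr_loglog_scale[of n D] assms(2) by (simp add: lg_def)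
  qed
  also have "\<dots> = 2 powr (loglog_scale D n + 2 * real (Suc D))" by (simp add: powr_add)
  also have "\<dots> \<le> 2 powr real k" using assms(4) by (intro powr_mono) auto
  also have "\<dots> = 2 ^ k" by (simp add: powr_realpow)
  finally have "real (2 * m * card (light_lists k (Suc D))) \<le> real (2 ^ k)" by simp
  then show ?thesis by (simp only: of_nat_le_iff)
qed

lemma exists_red_C2_le:
  assumes "real (ell (Suc D)) \<le> log 2 (real n)"
    and "real D * log 2 (log 2 (real n)) + 2 * real D + 3 \<le> log 2 (real n)"
    and "2 * log 2 (real n) + real (ell (Suc D) + 2 * Suc D) \<le> real n"
  shows "\<exists>k\<in>admissible_k (Suc D) n.
    red n (C2 n k (Suc D)) \<le> loglog_scale D n + real (ell (Suc D) + 4 * Suc D + 2)"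
proof -
  define lg where "lg = log 2 (real n)"
  define f where "f = loglog_scale D n"
  define k where "k = nat \<lceil>f\<rceil> + 2 * Suc D"
  have "1 \<le> real (ell (Suc D))" by (simp add: ell_def)
  then have "1 \<le> lg" using assms(1) by (simp add: lg_def)
  moreover have "real D * log 2 lg \<le> lg" using assms(2) by (simp add: lg_def)
  ultimately have "lg \<le> f" "f \<le> 2 * lg"
    using loglog_scale_bounds[of n D] by (simp_all add: lg_def f_def)
  then have k: "f + 2 * real (Suc D) \<le> real k" "real k \<le> f + 1 + 2 * real (Suc D)"
    using \<open>1 \<le> lg\<close> ceiling_correct[of f] by (simp_all add: k_def)
  then have "real k \<le> 2 * lg" using assms(2) by (simp add: f_def lg_def loglog_scale_def)
  have admissible: "k \<in> admissible_k (Suc D) n"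
  proof -
    have "ell (Suc D) \<le> k" using assms(1) \<open>lg \<le> f\<close> k by (simp add: lg_def)
    moreover have "real (k + ell (Suc D) + 2 * Suc D) \<le> real n"
      using \<open>real k \<le> 2 * lg\<close> assms(3) by (simp add: lg_def)
    ultimately show ?thesis by (simp add: admissible_k_def del: of_nat_add)
  qed
  define m where "m = n - k - ell (Suc D) - 2 * Suc D"
  have "2 * m * card (light_lists k (Suc D)) \<le> 2 ^ k"
    using \<open>1 \<le> lg\<close> \<open>real k \<le> 2 * lg\<close> k
    by (intro few_light_windows) (simp_all add: m_def lg_def f_def)
  then have "red m (A2 m k (Suc D)) \<le> 1"
    using k \<open>1 \<le> lg\<close> \<open>lg \<le> f\<close> by (intro red_A2_le_1) simp_all
  then have "red n (C2 n k (Suc D)) \<le> loglog_scale D n + real (ell (Suc D) + 4 * Suc D + 2)"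
    using k red_C2_eq[OF admissible] by (simp add: m_def f_def)
  then show ?thesis using admissible by blast
qed

lemma eventually_exists_red_C2_le:
  "\<forall>\<^sub>F n in sequentially. \<exists>k\<in>admissible_k (Suc D) n.
    red n (C2 n k (Suc D)) \<le> loglog_scale D n + real (ell (Suc D) + 4 * Suc D + 2)"
proof -
  have "\<forall>\<^sub>F n in sequentially. real (ell (Suc D)) \<le> log 2 (real n)"
    by real_asymp
  moreover have "\<forall>\<^sub>F n in sequentially.
      real D * log 2 (log 2 (real n)) + 2 * real D + 3 \<le> log 2 (real n)"
    by real_asymp
  moreover have "\<forall>\<^sub>F n in sequentially.
      2 * log 2 (real n) + real (ell (Suc D) + 2 * Suc D) \<le> real n"
    by real_asymp
  ultimately show ?thesis
    by eventually_elim (rule exists_red_C2_le)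
qed

lemma red_A2_ge_powr:
  assumes "3 + 2 * real D \<le> log 2 (real n) / 2" "log 2 (real n) / 2 \<le> real k"
    and "real n / 2 \<le> real m" "6 * real k \<le> real n"
  shows "2 powr (loglog_scale D n - real k) / (block_const D * 2 ^ D) \<le> red m (A2 m k (Suc D))"
proof -
  define lg where "lg = log 2 (real n)"
  define K where "K = block_const D"
  have "1 \<le> lg" "0 < K" using assms(1) block_const_pos by (auto simp: lg_def K_def)
  then have "0 < real n" by (cases "n = 0") (auto simp: lg_def log_def)
  have "real (3 + 2 * D) \<le> real k" using assms(1,2) by simp
  then have "3 \<le> k" "2 * D \<le> k" by (simp_all only: of_nat_le_iff)
  have "(2::real) ^ k = 2 powr loglog_scale D n / 2 powr (loglog_scale D n - real k)"
    by (simp add: powr_diff flip: powr_realpow)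
  also have "\<dots> = real n * lg ^ D / 2 powr (loglog_scale D n - real k)"
    using powr_loglog_scale[of n D] \<open>1 \<le> lg\<close> by (simp add: lg_def)
  finally have two_pow_k: "(2::real) ^ k = real n * lg ^ D / 2 powr (loglog_scale D n - real k)" .
  have "lg ^ D / 2 ^ D \<le> real k ^ D"
    using power_mono[of "lg / 2" "real k" D] assms(2) \<open>1 \<le> lg\<close> by (simp add: lg_def power_divide)
  then have "2 powr (loglog_scale D n - real k) / (K * 2 ^ D)
      \<le> real n * real k ^ D / (K * (real n * lg ^ D / 2 powr (loglog_scale D n - real k)))"
    using \<open>0 < real n\<close> \<open>0 < K\<close> \<open>1 \<le> lg\<close> by (simp add: field_simps)
  also have "\<dots> = real n * real k ^ D / (K * 2 ^ k)" by (simp add: two_pow_k)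
  also have "\<dots> \<le> red m (A2 m k (Suc D))"
    unfolding K_def using \<open>3 \<le> k\<close> \<open>2 * D \<le> k\<close> assms(3,4) by (rule red_A2_ge)
  finally show ?thesis by (simp add: K_def)
qed

lemma red_A2_ge_sqrt:
  assumes "3 + 2 * real D \<le> log 2 (real n) / 2" "Suc D \<le> k" "real k < log 2 (real n) / 2"
    and "real n / 2 \<le> real m" "16 * log 2 (real n) + 12 \<le> real n"
  shows "sqrt (real n) / (2 * block_const D) \<le> red m (A2 m k (Suc D))"
proof -
  define lg where "lg = log 2 (real n)"
  define K where "K = block_const D"
  define k' where "k' = nat \<lceil>lg / 2\<rceil>"
  have "1 \<le> lg" "0 < K" using assms(1) block_const_pos by (auto simp: lg_def K_def)
  then have "0 < real n" by (cases "n = 0") (auto simp: lg_def log_def)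
  have k': "lg / 2 \<le> real k'" "real k' < lg / 2 + 1"
    using \<open>1 \<le> lg\<close> ceiling_correct[of "lg / 2"] by (simp_all add: k'_def)
  then have "k \<le> k'" using assms(3) by (simp add: lg_def)
  have "real (3 + 2 * D) \<le> real k'" using k' assms(1) by (simp add: lg_def)
  then have "3 \<le> k'" "2 * D \<le> k'" by (simp_all only: of_nat_le_iff)
  have "(2::real) ^ k' \<le> 2 powr (lg / 2 + 1)"
    using k' by (simp add: powr_mono flip: powr_realpow)
  also have "\<dots> = 2 * (2 powr lg) powr (1 / 2)" by (simp add: powr_add powr_powr)
  also have "\<dots> = 2 * sqrt (real n)"
    using \<open>0 < real n\<close> by (simp add: lg_def powr_half_sqrt)
  finally have "K * 2 ^ k' \<le> K * (2 * sqrt (real n))" using \<open>0 < K\<close> by simp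
  moreover have "real n \<le> real n * real k' ^ D" using \<open>3 \<le> k'\<close> \<open>0 < real n\<close> by simp
  ultimately have "real n / (K * (2 * sqrt (real n))) \<le> real n * real k' ^ D / (K * 2 ^ k')"
    using \<open>0 < K\<close> \<open>0 < real n\<close> by (intro frac_le) auto
  moreover have "sqrt (real n) / (2 * K) = real n / (K * (2 * sqrt (real n)))"
    using \<open>0 < real n\<close> \<open>0 < K\<close> by (simp add: field_simps)
  ultimately have "sqrt (real n) / (2 * K) \<le> real n * real k' ^ D / (K * 2 ^ k')" by simp
  also have "\<dots> \<le> red m (A2 m k' (Suc D))"
    unfolding K_def using \<open>3 \<le> k'\<close> \<open>2 * D \<le> k'\<close> assms(4) k' assms(5)
    by (intro red_A2_ge) (simp_all add: lg_def)
  also have "\<dots> \<le> red m (A2 m k (Suc D))"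
    using assms(2) \<open>k \<le> k'\<close> by (rule red_A2_antimono)
  finally show ?thesis by (simp add: K_def)
qed

lemma red_C2_gt:
  fixes U c :: real
  assumes "3 + 2 * real D \<le> log 2 (real n) / 2"
    and "real D * log 2 (log 2 (real n)) \<le> log 2 (real n)"
    and "16 * log 2 (real n) + 2 * real (ell (Suc D) + 2 * Suc D) + 12 \<le> real n"
    and "loglog_scale D n + U < sqrt (real n) / (2 * block_const D)"
    and gap: "\<forall>t\<ge>c. t + U < 2 powr t / (block_const D * 2 ^ D)" and "0 \<le> c"
    and k: "k \<in> admissible_k (Suc D) n" "real k \<le> loglog_scale D n - c"
  shows "loglog_scale D n + U < red n (C2 n k (Suc D))"
proof -
  define lg where "lg = log 2 (real n)"
  define m where "m = n - k - ell (Suc D) - 2 * Suc D"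
  have red_eq: "red n (C2 n k (Suc D))
      = real k + real (ell (Suc D) + 2 * Suc D) + red m (A2 m k (Suc D))"
    using red_C2_eq[OF k(1)] by (simp add: m_def)
  have "1 \<le> lg" using assms(1) by (simp add: lg_def)
  then have "lg \<le> loglog_scale D n" "loglog_scale D n \<le> 2 * lg"
    using loglog_scale_bounds[of n D] assms(2) by (simp_all add: lg_def)
  have "k + (ell (Suc D) + 2 * Suc D) \<le> n" using k(1) by (simp add: admissible_k_def)
  then have "real m = real n - real k - real (ell (Suc D) + 2 * Suc D)"
    by (simp add: m_def)
  then have "real n / 2 \<le> real m"
    using k(2) \<open>loglog_scale D n \<le> 2 * lg\<close> assms(3) \<open>0 \<le> c\<close> by (simp add: lg_def)
  show ?thesis
  proof (cases "lg / 2 \<le> real k")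
    case True
    have "6 * real k \<le> real n"
      using k(2) \<open>loglog_scale D n \<le> 2 * lg\<close> assms(3) \<open>0 \<le> c\<close> by (simp add: lg_def)
    then have "2 powr (loglog_scale D n - real k) / (block_const D * 2 ^ D)
        \<le> red m (A2 m k (Suc D))"
      using assms(1) True \<open>real n / 2 \<le> real m\<close> by (intro red_A2_ge_powr) (simp_all add: lg_def)
    moreover have "loglog_scale D n - real k + U
        < 2 powr (loglog_scale D n - real k) / (block_const D * 2 ^ D)"
      using gap k(2) by simp
    ultimately show ?thesis using red_eq by simp
  next
    case False
    have "sqrt (real n) / (2 * block_const D) \<le> red m (A2 m k (Suc D))"
      using assms(1,3) False \<open>real n / 2 \<le> real m\<close> le_of_admissible_k[OF k(1)]
      by (intro red_A2_ge_sqrt) (simp_all add: lg_def)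
    then show ?thesis using red_eq assms(4) by simp
  qed
qed

lemma eventually_red_C2_gt:
  fixes U :: real
  shows "\<exists>c. \<forall>\<^sub>F n in sequentially. \<forall>k\<in>admissible_k (Suc D) n.
    real k \<le> loglog_scale D n - c \<longrightarrow> loglog_scale D n + U < red n (C2 n k (Suc D))"
proof -
  define K where "K = block_const D"
  have "0 < K" by (simp add: K_def block_const_pos)
  have "\<forall>\<^sub>F t in at_top. t + U < 2 powr t / M" if "0 < M" for M :: real
    using that by real_asymp
  from this[of "K * 2 ^ D"] \<open>0 < K\<close> obtain c0 where c0: "\<forall>t\<ge>c0. t + U < 2 powr t / (K * 2 ^ D)"
    by (auto simp: eventually_at_top_linorder)
  define c where "c = max 0 c0"
  have gap: "\<forall>t\<ge>c. t + U < 2 powr t / (block_const D * 2 ^ D)" and "0 \<le> c"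
    using c0 by (simp_all add: c_def K_def)
  have "\<forall>\<^sub>F n in sequentially. 3 + 2 * real D \<le> log 2 (real n) / 2"
    by real_asymp
  moreover have "\<forall>\<^sub>F n in sequentially. real D * log 2 (log 2 (real n)) \<le> log 2 (real n)"
    by real_asymp
  moreover have "\<forall>\<^sub>F n in sequentially.
      16 * log 2 (real n) + 2 * real (ell (Suc D) + 2 * Suc D) + 12 \<le> real n"
    by real_asymp
  moreover have "\<forall>\<^sub>F n in sequentially.
      log 2 (real n) + real D * log 2 (log 2 (real n)) + U < sqrt (real n) / (2 * M)"
    if "0 < M" for M :: real
    using that by real_asymp
  note this[OF \<open>0 < K\<close>, folded loglog_scale_def]
  ultimately have "\<forall>\<^sub>F n in sequentially. \<forall>k\<in>admissible_k (Suc D) n.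
    real k \<le> loglog_scale D n - c \<longrightarrow> loglog_scale D n + U < red n (C2 n k (Suc D))"
    by eventually_elim (use gap \<open>0 \<le> c\<close> in \<open>auto simp: K_def intro!: red_C2_gt\<close>)
  then show ?thesis ..
qed

lemma min_red_attained:
  assumes "k \<in> admissible_k d n"
  shows "\<exists>k'\<in>admissible_k d n. red n (C2 n k' d) = min_red d n \<and> min_red d n \<le> red n (C2 n k d)"
proof -
  have "finite (admissible_k d n)"
    by (rule finite_subset[of _ "{..n}"]) (auto simp: admissible_k_def)
  then have "min_red d n \<in> (\<lambda>k. red n (C2 n k d)) ` admissible_k d n"
    and "min_red d n \<le> red n (C2 n k d)"
    using assms unfolding min_red_def by (auto intro: Min_in Min_le)
  then show ?thesis by auto
qed

theorem lemma8:
  fixes d :: nat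
  assumes "d > 0"
  shows "\<exists>C::real. \<forall>\<^sub>F n in sequentially.
           \<bar>min_red d n - (log 2 (real n) + (real d - 1) * log 2 (log 2 (real n)))\<bar> \<le> C \<and>
           (\<exists>k \<in> admissible_k d n. red n (C2 n k d) = min_red d n \<and>
              \<bar>real k - (log 2 (real n) + (real d - 1) * log 2 (log 2 (real n)))\<bar> \<le> C)"
proof -
  obtain D where d: "d = Suc D" using assms gr0_implies_Suc by blast
  define U where "U = real (ell d + 4 * d + 2)"
  obtain c where lower: "\<forall>\<^sub>F n in sequentially. \<forall>k\<in>admissible_k d n.
      real k \<le> loglog_scale D n - c \<longrightarrow> loglog_scale D n + U < red n (C2 n k d)"
    using eventually_red_C2_gt[of D U] d by blast
  have upper: "\<forall>\<^sub>F n in sequentially. \<exists>k\<in>admissible_k d n. red n (C2 n k d) \<le> loglog_scale D n + U"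
    using eventually_exists_red_C2_le[of D] by (simp add: d U_def)
  have "\<forall>\<^sub>F n in sequentially. \<bar>min_red d n - loglog_scale D n\<bar> \<le> max U c \<and>
      (\<exists>k\<in>admissible_k d n. red n (C2 n k d) = min_red d n \<and> \<bar>real k - loglog_scale D n\<bar> \<le> max U c)"
    using upper lower
  proof eventually_elim
    case (elim n)
    then obtain k0 where "k0 \<in> admissible_k d n" "red n (C2 n k0 d) \<le> loglog_scale D n + U"
      by blast
    with min_red_attained obtain k where k: "k \<in> admissible_k d n" "red n (C2 n k d) = min_red d n"
      and min_le: "min_red d n \<le> loglog_scale D n + U"
      by fastforce
    moreover have "real k \<le> min_red d n" using real_le_red_C2[OF k(1)] k(2) by simp
    moreover have "loglog_scale D n - c < real k" using elim(2) k min_le by force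
    ultimately show ?case by (auto simp: abs_le_iff)
  qed
  then show ?thesis by (auto simp: d loglog_scale_def)
qed

end
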